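(* Let $n\ge2$, and let $g_1(s),\dots,g_n(s)$, $f(s)$ be rational proper transfer functions. Suppose each $g_i$ is output strictly passive, i.e. there is $\epsilon>0$ with $\mathrm{Re}(g_i(s))\ge\epsilon|g_i(s)|^2$ for all $\mathrm{Re}(s)>0$ and all $i$, and $f$ is positive real, i.e. $\mathrm{Re}(f(s))\ge0$ for all $\mathrm{Re}(s)>0$. Then there exists $\gamma>0$ such that for every positive semidefinite matrix $L$ (real symmetric $n\times n$), $$\|\bar g\|_{\mathcal{H}_\infty}\le\gamma\quad\text{and}\quad\|T\|_{\mathcal{H}_\infty}\le\gamma,$$ where $T(s)=(I_n+\mathrm{diag}\{g_i(s)\}f(s)L)^{-1}\mathrm{diag}\{g_i(s)\}$ and $\bar g(s)=\big(\frac1n\sum_{i=1}^n g_i^{-1}(s)\big)^{-1}$.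
   Context: $\|H\|_{\mathcal{H}_\infty}=\sup_{\mathrm{Re}(s)>0}\|H(s)\|$ with $\|\cdot\|$ the spectral norm. *)

theory Defs
  imports "HOL-Analysis.Analysis" "HOL-Computational_Algebra.Computational_Algebra"
begin

(* A (real-)rational transfer function, represented by numerator/denominator
   polynomials with real coefficients in lowest terms. *)
type_synonym tf = "real poly \<times> real poly"

definition tf_eval :: "tf \<Rightarrow> complex \<Rightarrow> complex" where
  "tf_eval G s = poly (map_poly complex_of_real (fst G)) s
                 / poly (map_poly complex_of_real (snd G)) s"

definition rational_proper :: "tf \<Rightarrow> bool" where
  "rational_proper G \<longleftrightarrow> snd G \<noteq> 0 \<and> coprime (fst G) (snd G)
      \<and> degree (fst G) \<le> degree (snd G)"

definition tf_defined_at :: "tf \<Rightarrow> complex \<Rightarrow> bool" where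
  "tf_defined_at G s \<longleftrightarrow> poly (map_poly complex_of_real (snd G)) s \<noteq> 0"

definition output_strictly_passive_with :: "real \<Rightarrow> tf \<Rightarrow> bool" where
  "output_strictly_passive_with eps G \<longleftrightarrow>
     (\<forall>s. 0 < Re s \<longrightarrow> tf_defined_at G s \<and>
          Re (tf_eval G s) \<ge> eps * (cmod (tf_eval G s))\<^sup>2)"

definition positive_real :: "tf \<Rightarrow> bool" where
  "positive_real G \<longleftrightarrow>
     (\<forall>s. 0 < Re s \<longrightarrow> tf_defined_at G s \<and> Re (tf_eval G s) \<ge> 0)"

definition spectral_norm :: "complex^'n^'m \<Rightarrow> real" where
  "spectral_norm A = onorm (\<lambda>x. A *v x)"

definition hinf_norm_mat :: "(complex \<Rightarrow> complex^'n^'m) \<Rightarrow> ereal" where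
  "hinf_norm_mat H = (SUP s\<in>{s. 0 < Re s}. ereal (spectral_norm (H s)))"

definition hinf_norm_scalar :: "(complex \<Rightarrow> complex) \<Rightarrow> ereal" where
  "hinf_norm_scalar h = (SUP s\<in>{s. 0 < Re s}. ereal (cmod (h s)))"

definition psd :: "real^'n^'n \<Rightarrow> bool" where
  "psd L \<longleftrightarrow> transpose L = L \<and> (\<forall>x. x \<bullet> (L *v x) \<ge> 0)"

definition cdiag :: "('n \<Rightarrow> complex) \<Rightarrow> complex^'n^'n" where
  "cdiag d = (\<chi> i j. if i = j then d i else 0)"

definition closed_loop_T :: "('n::finite \<Rightarrow> tf) \<Rightarrow> tf \<Rightarrow> real^'n^'n \<Rightarrow> complex \<Rightarrow> complex^'n^'n" where
  "closed_loop_T g f L s =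
     (let D = cdiag (\<lambda>i. tf_eval (g i) s);
          fL = (\<chi> i j. tf_eval f s * complex_of_real (L $ i $ j))
      in matrix_inv (mat 1 + D ** fL) ** D)"

definition gbar :: "('n::finite \<Rightarrow> tf) \<Rightarrow> complex \<Rightarrow> complex" where
  "gbar g s = inverse ((1 / of_nat CARD('n)) * (\<Sum>i\<in>UNIV. inverse (tf_eval (g i) s)))"

end

theory Submission
  imports Defs
begin

text \<open>Output strict passivity of \<open>g\<close> at \<open>s\<close> says exactly that \<open>Re (1 / g s) \<ge> \<epsilon>\<close> wherever
  \<open>g s \<noteq> 0\<close>. Hence the sum defining the inverse of \<open>gbar\<close> has real part at least \<open>\<epsilon>\<close>, and
  \<open>|gbar| \<le> n / \<epsilon>\<close>. For \<open>T\<close>, write \<open>(I + D f L) x = D y\<close> with \<open>D = diag g\<^sub>i\<close>; dividing the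
  \<open>i\<close>-th row by \<open>g\<^sub>i\<close> and pairing with \<open>x\<close> gives
  \<open>\<Sum> |x\<^sub>i|\<^sup>2 / g\<^sub>i + f x\<^sup>* L x = x\<^sup>* y\<close>. Since \<open>x\<^sup>* L x \<ge> 0\<close> and \<open>Re f \<ge> 0\<close>, taking real parts
  yields \<open>\<epsilon> \<parallel>x\<parallel>\<^sup>2 \<le> \<parallel>x\<parallel> \<parallel>y\<parallel>\<close>. So \<open>I + D f L\<close> is invertible and \<open>\<parallel>T\<parallel> \<le> 1 / \<epsilon>\<close>, uniformly in \<open>L\<close>.
  The bounds hold pointwise in the right half plane.\<close>

lemma Re_inverse_ge_if_output_strictly_passive:
  fixes z :: complex
  assumes "eps * (cmod z)\<^sup>2 \<le> Re z" and "z \<noteq> 0"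
  shows "eps \<le> Re (inverse z)"
proof -
  have pos: "0 < (cmod z)\<^sup>2"
    using assms(2) by simp
  have "Re (inverse z) * (cmod z)\<^sup>2 = Re z"
    using pos by (simp add: Re_divide inverse_eq_divide cmod_def)
  with assms(1) have "eps * (cmod z)\<^sup>2 \<le> Re (inverse z) * (cmod z)\<^sup>2"
    by simp
  then show ?thesis
    using pos by (rule mult_right_le_imp_le)
qed

lemma output_strictly_passive_energy_le:
  fixes x y w z :: complex
  assumes osp: "eps * (cmod z)\<^sup>2 \<le> Re z" and eq: "x + z * w = z * y"
  shows "eps * (cmod x)\<^sup>2 + Re (cnj x * w) \<le> Re (cnj x * y)"
proof (cases "z = 0")
  case True
  with eq show ?thesis by simp
next
  case False
  have "cnj x * x * inverse z + cnj x * w = cnj x * y"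
  proof -
    have "cnj x * inverse z * (x + z * w) = cnj x * inverse z * (z * y)"
      using eq by simp
    with False show ?thesis by (simp add: field_simps)
  qed
  moreover have "Re (cnj x * x * inverse z) = (cmod x)\<^sup>2 * Re (inverse z)"
  proof -
    have "cnj x * x = complex_of_real ((cmod x)\<^sup>2)"
      by (metis complex_norm_square mult.commute)
    then show ?thesis by simp
  qed
  moreover have "eps * (cmod x)\<^sup>2 \<le> (cmod x)\<^sup>2 * Re (inverse z)"
    using Re_inverse_ge_if_output_strictly_passive[OF osp False]
    by (metis mult.commute mult_right_mono zero_le_power2)
  ultimately show ?thesis by (metis plus_complex.sel(1) add_right_mono)
qed

lemma psd_hermitian_form:
  fixes L :: "real^'n::finite^'n" and x :: "complex^'n"
  assumes "psd L"
  defines "B \<equiv> \<Sum>i\<in>UNIV. cnj (x$i) * (\<Sum>j\<in>UNIV. of_real (L$i$j) * x$j)"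
  shows "Im B = 0" and "0 \<le> Re B"
proof -
  have sym: "L$i$j = L$j$i" for i j
    using assms(1) unfolding psd_def by (metis transpose_def vec_lambda_beta)
  define a where "a = (\<chi> i. Re (x$i))"
  define b where "b = (\<chi> i. Im (x$i))"
  have "Re B = (\<Sum>i\<in>UNIV. \<Sum>j\<in>UNIV. L$i$j * (Re (x$i) * Re (x$j) + Im (x$i) * Im (x$j)))"
    unfolding B_def by (simp add: sum_distrib_left algebra_simps)
  also have "\<dots> = a \<bullet> (L *v a) + b \<bullet> (L *v b)"
    by (simp add: a_def b_def inner_vec_def matrix_vector_mult_def sum_distrib_left
         sum.distrib[symmetric] algebra_simps)
  finally show "0 \<le> Re B"
    using assms(1) unfolding psd_def by (metis add_nonneg_nonneg)
  have "Im B = (\<Sum>i\<in>UNIV. \<Sum>j\<in>UNIV. L$i$j * (Re (x$i) * Im (x$j)))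
             - (\<Sum>i\<in>UNIV. \<Sum>j\<in>UNIV. L$i$j * (Im (x$i) * Re (x$j)))"
    unfolding B_def by (simp add: sum_distrib_left algebra_simps sum_subtractf)
  also have "(\<Sum>i\<in>UNIV. \<Sum>j\<in>UNIV. L$i$j * (Im (x$i) * Re (x$j)))
           = (\<Sum>j\<in>UNIV. \<Sum>i\<in>UNIV. L$i$j * (Im (x$i) * Re (x$j)))"
    by (rule sum.swap)
  also have "\<dots> = (\<Sum>i\<in>UNIV. \<Sum>j\<in>UNIV. L$i$j * (Re (x$i) * Im (x$j)))"
    by (simp add: sym mult.commute)
  finally show "Im B = 0" by simp
qed

lemma cdiag_mult_vector_nth [simp]: "(cdiag d *v v) $ k = d k * v $ k"
proof -
  have "(cdiag d *v v) $ k = (\<Sum>j\<in>UNIV. if k = j then d k * v$j else 0)"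
    unfolding matrix_vector_mult_def cdiag_def vec_lambda_beta by (rule sum.cong) auto
  then show ?thesis by simp
qed

lemma closed_loop_solution_norm_le:
  fixes d :: "'n::finite \<Rightarrow> complex" and c :: complex and L :: "real^'n^'n"
    and x y :: "complex^'n"
  assumes osp: "\<And>i. eps * (cmod (d i))\<^sup>2 \<le> Re (d i)" and pr: "0 \<le> Re c"
    and L: "psd L" and eps: "0 < eps"
    and eq: "(mat 1 + cdiag d ** (\<chi> i j. c * complex_of_real (L$i$j))) *v x = cdiag d *v y"
  shows "eps * norm x \<le> norm y"
proof -
  define Lx where "Lx i = (\<Sum>j\<in>UNIV. of_real (L$i$j) * x$j)" for i
  define B where "B = (\<Sum>i\<in>UNIV. cnj (x$i) * Lx i)"
  have row: "x$i + d i * (c * Lx i) = d i * y$i" for i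
  proof -
    define F where "F = (\<chi> i j. c * complex_of_real (L$i$j))"
    have "x + cdiag d *v (F *v x) = cdiag d *v y"
      using eq by (simp add: F_def matrix_vector_mult_add_rdistrib matrix_vector_mul_assoc)
    then have "x$i + d i * (F *v x)$i = d i * y$i"
      by (metis cdiag_mult_vector_nth vector_add_component)
    moreover have "(F *v x)$i = c * Lx i"
      by (simp add: F_def Lx_def matrix_vector_mult_def sum_distrib_left mult.assoc)
    ultimately show ?thesis by simp
  qed
  have "0 \<le> Re (c * B)"
    using psd_hermitian_form[OF L, of x] pr unfolding B_def Lx_def by simp
  also have "Re (c * B) = (\<Sum>i\<in>UNIV. Re (cnj (x$i) * (c * Lx i)))"
    by (simp add: B_def sum_distrib_left Re_sum mult.left_commute)
  finally have "eps * (norm x)\<^sup>2 \<le>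
      (\<Sum>i\<in>UNIV. eps * (cmod (x$i))\<^sup>2) + (\<Sum>i\<in>UNIV. Re (cnj (x$i) * (c * Lx i)))"
    by (simp add: norm_vec_def L2_set_def sum_distrib_left sum_nonneg)
  also have "\<dots> = (\<Sum>i\<in>UNIV. eps * (cmod (x$i))\<^sup>2 + Re (cnj (x$i) * (c * Lx i)))"
    by (rule sum.distrib[symmetric])
  also have "\<dots> \<le> (\<Sum>i\<in>UNIV. Re (cnj (x$i) * y$i))"
    by (intro sum_mono output_strictly_passive_energy_le[OF osp row])
  also have "\<dots> = x \<bullet> y"
    by (simp add: inner_vec_def inner_complex_def)
  also have "\<dots> \<le> norm x * norm y"
    by (rule norm_cauchy_schwarz)
  finally have "eps * (norm x)\<^sup>2 \<le> norm x * norm y" .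
  with eps show ?thesis
    by (cases "norm x = 0") (simp_all add: power2_eq_square)
qed

lemma invertible_if_kernel_trivial:
  fixes A :: "'a::field^'n::finite^'n"
  assumes "\<And>x. A *v x = 0 \<Longrightarrow> x = 0"
  shows "invertible A"
  using assms by (simp add: invertible_left_inverse matrix_left_invertible_ker)

lemma matrix_inv_right:
  assumes "invertible A"
  shows "A ** matrix_inv A = mat 1"
  using assms unfolding invertible_def matrix_inv_def by (rule someI_ex[THEN conjunct1])

lemma spectral_norm_closed_loop_T_le:
  fixes g :: "'n::finite \<Rightarrow> tf" and L :: "real^'n^'n"
  assumes osp: "\<And>i. eps * (cmod (tf_eval (g i) s))\<^sup>2 \<le> Re (tf_eval (g i) s)"
    and pr: "0 \<le> Re (tf_eval f s)" and L: "psd L" and eps: "0 < eps"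
  shows "spectral_norm (closed_loop_T g f L s) \<le> 1 / eps"
proof -
  define D where "D = cdiag (\<lambda>i. tf_eval (g i) s)"
  define M where "M = mat 1 + D ** (\<chi> i j. tf_eval f s * complex_of_real (L $ i $ j))"
  have T: "closed_loop_T g f L s = matrix_inv M ** D"
    unfolding closed_loop_T_def M_def D_def Let_def ..
  have bound: "M *v x = D *v y \<Longrightarrow> eps * norm x \<le> norm y" for x y
    unfolding M_def D_def by (rule closed_loop_solution_norm_le[OF osp pr L eps])
  have "invertible M"
  proof (rule invertible_if_kernel_trivial)
    fix x assume "M *v x = 0"
    then have "eps * norm x \<le> 0" using bound[of x 0] by simp
    with eps show "x = 0" by (simp add: mult_le_0_iff)
  qed
  then have "M *v (closed_loop_T g f L s *v y) = D *v y" for y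
    unfolding T by (simp add: matrix_vector_mul_assoc matrix_mul_assoc matrix_inv_right)
  then have "norm (closed_loop_T g f L s *v y) \<le> 1 / eps * norm y" for y
    using bound eps by (simp add: field_simps)
  then show ?thesis
    unfolding spectral_norm_def by (rule onorm_le)
qed

lemma cmod_gbar_le:
  fixes g :: "'n::finite \<Rightarrow> tf"
  assumes osp: "\<And>i. eps * (cmod (tf_eval (g i) s))\<^sup>2 \<le> Re (tf_eval (g i) s)" and eps: "0 < eps"
  shows "cmod (gbar g s) \<le> real CARD('n) / eps"
proof -
  define S where "S = (\<Sum>i\<in>UNIV. inverse (tf_eval (g i) s))"
  have gbar: "gbar g s = of_nat CARD('n) / S"
    unfolding gbar_def S_def by (simp add: field_simps)
  show ?thesis
  proof (cases "S = 0")
    case True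
    \<comment> \<open>then \<open>gbar g s = inverse 0 = 0\<close>\<close>
    with eps show ?thesis by (simp add: gbar)
  next
    case False
    then obtain k where k: "tf_eval (g k) s \<noteq> 0"
      unfolding S_def by (metis (no_types, lifting) inverse_zero sum.neutral)
    have Re_inverse_nonneg: "0 \<le> Re (inverse (tf_eval (g i) s))" for i
      using Re_inverse_ge_if_output_strictly_passive[OF osp, of i] eps
      by (cases "tf_eval (g i) s = 0") simp_all
    have "eps \<le> Re (inverse (tf_eval (g k) s))"
      by (rule Re_inverse_ge_if_output_strictly_passive[OF osp k])
    also have "\<dots> \<le> Re S"
      unfolding S_def Re_sum by (rule member_le_sum) (use Re_inverse_nonneg in auto)
    also have "\<dots> \<le> cmod S"
      by (rule complex_Re_le_cmod)
    finally have "eps \<le> cmod S" .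
    with eps show ?thesis
      by (simp add: gbar norm_divide frac_le)
  qed
qed

lemma hinf_norm_scalar_le:
  assumes "\<And>s. 0 < Re s \<Longrightarrow> cmod (h s) \<le> \<gamma>"
  shows "hinf_norm_scalar h \<le> ereal \<gamma>"
  unfolding hinf_norm_scalar_def using assms by (auto intro: SUP_least)

lemma hinf_norm_mat_le:
  assumes "\<And>s. 0 < Re s \<Longrightarrow> spectral_norm (H s) \<le> \<gamma>"
  shows "hinf_norm_mat H \<le> ereal \<gamma>"
  unfolding hinf_norm_mat_def using assms by (auto intro: SUP_least)

theorem theorem4:
  fixes g :: "'n::finite \<Rightarrow> tf" and f :: tf
  assumes "CARD('n) \<ge> 2"
    and "\<And>i. rational_proper (g i)"
    and "rational_proper f"
    and "\<exists>eps>0. \<forall>i. output_strictly_passive_with eps (g i)"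
    and "positive_real f"
  shows "\<exists>\<gamma>>0. \<forall>L :: real^'n^'n. psd L \<longrightarrow>
           hinf_norm_scalar (gbar g) \<le> ereal \<gamma> \<and>
           hinf_norm_mat (closed_loop_T g f L) \<le> ereal \<gamma>"
proof -
  obtain eps where eps: "0 < eps" and "\<And>i. output_strictly_passive_with eps (g i)"
    using assms(4) by blast
  then have osp: "\<And>i. eps * (cmod (tf_eval (g i) s))\<^sup>2 \<le> Re (tf_eval (g i) s)"
    if "0 < Re s" for s
    using that unfolding output_strictly_passive_with_def by blast
  have pr: "0 \<le> Re (tf_eval f s)" if "0 < Re s" for s
    using assms(5) that unfolding positive_real_def by blast
  define \<gamma> where "\<gamma> = real CARD('n) / eps"
  have "1 / eps \<le> \<gamma>"
    unfolding \<gamma>_def using eps by (simp add: divide_right_mono)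
  then have "hinf_norm_scalar (gbar g) \<le> ereal \<gamma> \<and> hinf_norm_mat (closed_loop_T g f L) \<le> ereal \<gamma>"
    if "psd L" for L
  proof (intro conjI hinf_norm_scalar_le hinf_norm_mat_le)
    fix s :: complex assume s: "0 < Re s"
    show "cmod (gbar g s) \<le> \<gamma>"
      unfolding \<gamma>_def by (rule cmod_gbar_le[OF _ eps]) (rule osp[OF s])
    have "spectral_norm (closed_loop_T g f L s) \<le> 1 / eps"
      by (rule spectral_norm_closed_loop_T_le[OF _ pr[OF s] that eps]) (rule osp[OF s])
    with \<open>1 / eps \<le> \<gamma>\<close> show "spectral_norm (closed_loop_T g f L s) \<le> \<gamma>"
      by linarith
  qed
  moreover have "0 < \<gamma>"
    unfolding \<gamma>_def using eps by simp
  ultimately show ?thesis by blast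
qed

end
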